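(* Assume each $L_r:Lip_d(I)\to Lip_d(I)$ ($r\in\mathbb{N}$) is linear and that there is a linear operator $L$ on $Lip_d(I)$ with $\|Lf\|_\infty=\sup_{r\in\mathbb{N}}\|L_rf\|_\infty$ for all $f\in Lip_d(I)$. Then the non-stationary fractal operator $\mathfrak{F}^\alpha_b:Lip_d(I)\to C(I)$, $\mathfrak{F}^\alpha_b(f)=f^\alpha_b$, is relatively Lipschitz with respect to $L$: for all $f,g\in Lip_d(I)$, $$\|\mathfrak{F}^\alpha_b(f)-\mathfrak{F}^\alpha_b(g)\|_\infty\le\frac{1}{1-\|\alpha\|_\infty}\|f-g\|_\infty+\frac{\|\alpha\|_\infty}{1-\|\alpha\|_\infty}\|Lf-Lg\|_\infty,$$ so the $L$-Lipschitz constant of $\mathfrak{F}^\alpha_b$ does not exceed $\frac{\|\alpha\|_\infty}{1-\|\alpha\|_\infty}$.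
   Context: Setting: $I=[x_0,x_N]$ with partition $\Delta: x_0<x_1<\dots<x_N$, $I_i=[x_{i-1},x_i]$, $l_i:I\to I_i$ the increasing affine bijection $l_i(x)=\frac{x_i-x_{i-1}}{x_N-x_0}x+\frac{x_Nx_{i-1}-x_0x_i}{x_N-x_0}$, and $Q_i=l_i^{-1}$. Scaling functions $\alpha_{i,r}:I\to\mathbb{R}$ ($i=1,\dots,N$, $r\in\mathbb{N}$) are continuous with $\|\alpha\|_\infty:=\sup_{r}\max_i\|\alpha_{i,r}\|_\infty<1$. $Lip_d(I)$ ($0<d\le1$) is the space of real functions $g$ on $I$ with $\sup_{x\ne y}|g(x)-g(y)|/|x-y|^d<\infty$, regarded as a subset of $C(I)$ with the supremum norm. $L_r$ satisfy $(L_rg)(x_0)=g(x_0)$, $(L_rg)(x_N)=g(x_N)$ and $\sup_r\|L_r\|_\infty<\infty$ (operator norms w.r.t. the sup norm). An operator $\mathcal{T}_1$ is relatively Lipschitz w.r.t. $\mathcal{T}_2$ if $\|\mathcal{T}_1u-\mathcal{T}_1v\|\le M_1\|u-v\|+M_2\|\mathcal{T}_2u-\mathcal{T}_2v\|$ for some $M_1,M_2\ge0$ and all $u,v$; the infimum of such $M_2$ is the $\mathcal{T}_2$-Lipschitz constant. Non-stationary $\alpha$-fractal function: for $f\in C(I)$ and base functions $b_r\in C(I)$ with $b_r(x_0)=f(x_0)$, $b_r(x_N)=f(x_N)$, $\sup_r\|b_r\|_\infty<\infty$, let $C_f(I)=\{g\in C(I):g(x_0)=f(x_0),g(x_N)=f(x_N)\}$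 and $T^{\alpha_r}:C_f(I)\to C_f(I)$, $(T^{\alpha_r}g)(x)=f(x)+\alpha_{i,r}(Q_i(x))(g-b_r)(Q_i(x))$ for $x\in I_i$. For every $g\in C_f(I)$, $T^{\alpha_1}\circ\cdots\circ T^{\alpha_r}g$ converges uniformly to a function independent of $g$; this is the non-stationary $\alpha$-fractal function. $f^\alpha_b$ denotes it for $f\in Lip_d(I)$ with $b_r=L_rf$. *)

theory Defs
  imports "HOL-Analysis.Analysis"
begin

(* Partition x_0 < ... < x_N of I = [x_0, x_N], given by xs :: nat => real. *)

definition Ivl :: "(nat \<Rightarrow> real) \<Rightarrow> nat \<Rightarrow> real set" where
  "Ivl xs N = {xs 0 .. xs N}"

definition supnorm :: "real set \<Rightarrow> (real \<Rightarrow> real) \<Rightarrow> real" where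
  "supnorm S h = (SUP x\<in>S. \<bar>h x\<bar>)"

definition Lip :: "real \<Rightarrow> real set \<Rightarrow> (real \<Rightarrow> real) set" where
  "Lip d S = {g. \<exists>K. \<forall>x\<in>S. \<forall>y\<in>S. \<bar>g x - g y\<bar> \<le> K * \<bar>x - y\<bar> powr d}"

(* Q_i = l_i^{-1} : I_i -> I *)
definition Qmap :: "(nat \<Rightarrow> real) \<Rightarrow> nat \<Rightarrow> nat \<Rightarrow> real \<Rightarrow> real" where
  "Qmap xs N i x = xs 0 + (x - xs (i - 1)) * (xs N - xs 0) / (xs i - xs (i - 1))"

(* index i with x in I_i (the smallest such one at the knots) *)
definition idx :: "(nat \<Rightarrow> real) \<Rightarrow> nat \<Rightarrow> real \<Rightarrow> nat" where
  "idx xs N x = (LEAST i. 1 \<le> i \<and> x \<le> xs i)"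

(* (T^{alpha_r} g)(x) = f x + alpha_{i,r}(Q_i x) * (g - b_r)(Q_i x), x in I_i;
   alpha i r is the scaling function alpha_{i,r} *)
definition Top :: "(nat \<Rightarrow> real) \<Rightarrow> nat \<Rightarrow> (nat \<Rightarrow> nat \<Rightarrow> real \<Rightarrow> real)
    \<Rightarrow> nat \<Rightarrow> (real \<Rightarrow> real) \<Rightarrow> (real \<Rightarrow> real) \<Rightarrow> (real \<Rightarrow> real) \<Rightarrow> real \<Rightarrow> real" where
  "Top xs N alpha r f b g x =
     (let i = idx xs N x; q = Qmap xs N i x in f x + alpha i r q * (g q - b q))"

(* T^{alpha_1} o ... o T^{alpha_r} g, with base functions b_r = L r f *)
definition Tcomp :: "(nat \<Rightarrow> real) \<Rightarrow> nat \<Rightarrow> (nat \<Rightarrow> nat \<Rightarrow> real \<Rightarrow> real)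
    \<Rightarrow> (nat \<Rightarrow> (real \<Rightarrow> real) \<Rightarrow> (real \<Rightarrow> real)) \<Rightarrow> (real \<Rightarrow> real) \<Rightarrow> nat
    \<Rightarrow> (real \<Rightarrow> real) \<Rightarrow> real \<Rightarrow> real" where
  "Tcomp xs N alpha L f r g = foldr (\<lambda>j h. Top xs N alpha j f (L j f) h) [1..<Suc r] g"

(* the non-stationary alpha-fractal function f^alpha_b (limit taken from g = f \<in> C_f(I)) *)
definition fractal :: "(nat \<Rightarrow> real) \<Rightarrow> nat \<Rightarrow> (nat \<Rightarrow> nat \<Rightarrow> real \<Rightarrow> real)
    \<Rightarrow> (nat \<Rightarrow> (real \<Rightarrow> real) \<Rightarrow> (real \<Rightarrow> real)) \<Rightarrow> (real \<Rightarrow> real) \<Rightarrow> real \<Rightarrow> real" where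
  "fractal xs N alpha L f x = lim (\<lambda>r. Tcomp xs N alpha L f r f x)"

definition alpha_vals :: "(nat \<Rightarrow> real) \<Rightarrow> nat \<Rightarrow> (nat \<Rightarrow> nat \<Rightarrow> real \<Rightarrow> real) \<Rightarrow> real set" where
  "alpha_vals xs N alpha = {\<bar>alpha i r x\<bar> | i r x. 1 \<le> i \<and> i \<le> N \<and> 1 \<le> r \<and> x \<in> Ivl xs N}"

definition alpha_norm :: "(nat \<Rightarrow> real) \<Rightarrow> nat \<Rightarrow> (nat \<Rightarrow> nat \<Rightarrow> real \<Rightarrow> real) \<Rightarrow> real" where
  "alpha_norm xs N alpha = Sup (alpha_vals xs N alpha)"

end

theory Submission
  imports Defs
begin

(* Write a = ||alpha||. On I_i the difference of two steps T f b u and T g c v at x is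
   (f - g)(x) + alpha_{i,r}(Q_i x) * ((u - v) - (b - c))(Q_i x).  With b = L_r f, c = L_r g,
   linearity and ||L_r h|| <= ||L h|| give |L_r f - L_r g| <= ||L f - L g|| =: T, so the bound
   B = (||f - g|| + a T) / (1 - a), which satisfies ||f - g|| + a (B + T) = B, holds for the starting
   pair (f, g) and is preserved by every step; it passes to the pointwise limits f^alpha_b, g^alpha_b.
   These limits exist because, with b = c, a step contracts differences by the factor a, so
   consecutive iterates differ by at most a^r * a * sup_r ||L_r f - f||. *)

lemma Lip_bdd_above_abs:
  assumes "h \<in> Lip d {a..b}" "0 \<le> d"
  shows "bdd_above ((\<lambda>x. \<bar>h x\<bar>) ` {a..b})"
proof (cases "a \<le> b")
  case True
  obtain K where K: "\<forall>x\<in>{a..b}. \<forall>y\<in>{a..b}. \<bar>h x - h y\<bar> \<le> K * \<bar>x - y\<bar> powr d"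
    using assms(1) unfolding Lip_def by blast
  have "\<bar>h x\<bar> \<le> \<bar>h a\<bar> + \<bar>K\<bar> * (b - a) powr d" if x: "x \<in> {a..b}" for x
  proof -
    have "a \<in> {a..b}" using True by simp
    then have "\<bar>h x - h a\<bar> \<le> K * \<bar>x - a\<bar> powr d" using K x by blast
    also have "\<dots> \<le> \<bar>K\<bar> * \<bar>x - a\<bar> powr d" by (intro mult_right_mono) auto
    also have "\<dots> \<le> \<bar>K\<bar> * (b - a) powr d"
      using x assms(2) by (intro mult_left_mono powr_mono2) auto
    finally show ?thesis by linarith
  qed
  then show ?thesis by (intro bdd_aboveI2)
qed simp

lemma Lip_abs_le_supnorm:
  assumes "h \<in> Lip d {a..b}" "0 \<le> d" "x \<in> {a..b}"
  shows "\<bar>h x\<bar> \<le> supnorm {a..b} h"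
  unfolding supnorm_def by (rule cSUP_upper[OF assms(3) Lip_bdd_above_abs[OF assms(1,2)]])

lemma Lip_abs_le_SUP_supnorm:
  assumes "\<And>r. r \<in> R \<Longrightarrow> F r \<in> Lip d {a..b}" "0 \<le> d"
    and "bdd_above ((\<lambda>r. supnorm {a..b} (F r)) ` R)" "r \<in> R" "x \<in> {a..b}"
  shows "\<bar>F r x\<bar> \<le> (SUP r\<in>R. supnorm {a..b} (F r))"
  using Lip_abs_le_supnorm[OF assms(1,2,5), OF assms(4)] cSUP_upper[OF assms(4,3)] by linarith

lemma Lip_diff:
  assumes "h \<in> Lip d S" "k \<in> Lip d S"
  shows "(\<lambda>x. h x - k x) \<in> Lip d S"
proof -
  obtain K1 where K1: "\<forall>x\<in>S. \<forall>y\<in>S. \<bar>h x - h y\<bar> \<le> K1 * \<bar>x - y\<bar> powr d"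
    using assms(1) unfolding Lip_def by blast
  obtain K2 where K2: "\<forall>x\<in>S. \<forall>y\<in>S. \<bar>k x - k y\<bar> \<le> K2 * \<bar>x - y\<bar> powr d"
    using assms(2) unfolding Lip_def by blast
  have "\<bar>h x - k x - (h y - k y)\<bar> \<le> (K1 + K2) * \<bar>x - y\<bar> powr d" if "x \<in> S" "y \<in> S" for x y
  proof -
    have "\<bar>h x - k x - (h y - k y)\<bar> \<le> \<bar>h x - h y\<bar> + \<bar>k x - k y\<bar>" by linarith
    also have "\<dots> \<le> K1 * \<bar>x - y\<bar> powr d + K2 * \<bar>x - y\<bar> powr d"
      using K1 K2 that by (intro add_mono) auto
    finally show ?thesis by (simp add: distrib_right)
  qed
  then show ?thesis unfolding Lip_def by blast
qed

lemma Lip_scale: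
  assumes "h \<in> Lip d S"
  shows "(\<lambda>x. c * h x) \<in> Lip d S"
proof -
  obtain K where K: "\<forall>x\<in>S. \<forall>y\<in>S. \<bar>h x - h y\<bar> \<le> K * \<bar>x - y\<bar> powr d"
    using assms unfolding Lip_def by blast
  have "\<bar>c * h x - c * h y\<bar> \<le> (\<bar>c\<bar> * K) * \<bar>x - y\<bar> powr d" if "x \<in> S" "y \<in> S" for x y
  proof -
    have "\<bar>c * h x - c * h y\<bar> = \<bar>c\<bar> * \<bar>h x - h y\<bar>"
      by (simp add: abs_mult[symmetric] right_diff_distrib)
    also have "\<dots> \<le> \<bar>c\<bar> * (K * \<bar>x - y\<bar> powr d)" using K that by (intro mult_left_mono) auto
    finally show ?thesis by simp
  qed
  then show ?thesis unfolding Lip_def by blast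
qed

lemma Lip_operator_diff:
  assumes add: "\<And>h k x. h \<in> Lip d S \<Longrightarrow> k \<in> Lip d S \<Longrightarrow> x \<in> S \<Longrightarrow> T (\<lambda>y. h y + k y) x = T h x + T k x"
    and scale: "\<And>c h x. h \<in> Lip d S \<Longrightarrow> x \<in> S \<Longrightarrow> T (\<lambda>y. c * h y) x = c * T h x"
    and h: "h \<in> Lip d S" and k: "k \<in> Lip d S" and x: "x \<in> S"
  shows "T (\<lambda>y. h y - k y) x = T h x - T k x"
proof -
  have "(\<lambda>y. h y - k y) = (\<lambda>y. h y + (- 1) * k y)" by simp
  then have "T (\<lambda>y. h y - k y) x = T h x + T (\<lambda>y. (- 1) * k y) x"
    using add[OF h Lip_scale[OF k] x] by metis
  also have "T (\<lambda>y. (- 1) * k y) x = (- 1) * T k x" by (rule scale[OF k x])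
  finally show ?thesis by simp
qed

lemma convergent_if_geometric_increments:
  fixes X :: "nat \<Rightarrow> real"
  assumes "0 \<le> a" "a < 1" "\<And>n. \<bar>X (Suc n) - X n\<bar> \<le> a ^ n * E"
  shows "convergent X"
proof -
  have "summable (\<lambda>n. a ^ n * E)" using assms(1,2) by (intro summable_mult2 summable_geometric) auto
  then have "summable (\<lambda>n. X (Suc n) - X n)"
    by (rule summable_comparison_test[rotated]) (use assms(3) in auto)
  then have "(\<lambda>n. X 0 + (\<Sum>i<n. X (Suc i) - X i)) \<longlonglongrightarrow> X 0 + (\<Sum>i. X (Suc i) - X i)"
    by (intro tendsto_add tendsto_const summable_LIMSEQ)
  then show ?thesis unfolding convergent_def by (auto simp: sum_lessThan_telescope)
qed

locale partition =
  fixes xs :: "nat \<Rightarrow> real" and N :: nat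
  assumes N_pos: "1 \<le> N" and xs_strict: "\<And>i. i < N \<Longrightarrow> xs i < xs (Suc i)"
begin

lemma xs_mono: "i \<le> j \<Longrightarrow> j \<le> N \<Longrightarrow> xs i \<le> xs j"
proof (induction j)
  case (Suc j)
  then show ?case using xs_strict[of j] by (cases "i = Suc j") auto
qed simp

lemma left_in_Ivl: "xs 0 \<in> Ivl xs N"
  using xs_mono[of 0 N] by (simp add: Ivl_def)

lemma idx_bounds:
  assumes "x \<in> Ivl xs N"
  shows "1 \<le> idx xs N x" "idx xs N x \<le> N" "xs (idx xs N x - 1) \<le> x" "x \<le> xs (idx xs N x)"
proof -
  let ?P = "\<lambda>i. 1 \<le> i \<and> x \<le> xs i"
  have PN: "?P N" using assms N_pos by (auto simp: Ivl_def)
  show P: "1 \<le> idx xs N x" "x \<le> xs (idx xs N x)"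
    using LeastI[of ?P N, OF PN] unfolding idx_def by auto
  show "idx xs N x \<le> N" unfolding idx_def by (rule Least_le[of ?P N, OF PN])
  show "xs (idx xs N x - 1) \<le> x"
  proof (cases "idx xs N x = 1")
    case True then show ?thesis using assms by (simp add: Ivl_def)
  next
    case False
    then have "\<not> ?P (idx xs N x - 1)"
      using P(1) not_less_Least[of "idx xs N x - 1" ?P] unfolding idx_def by auto
    then show ?thesis using P(1) False by auto
  qed
qed

lemma Qmap_in_Ivl:
  assumes "x \<in> Ivl xs N"
  shows "Qmap xs N (idx xs N x) x \<in> Ivl xs N"
proof -
  define i where "i = idx xs N x"
  note i = idx_bounds[OF assms, folded i_def]
  have gap: "0 < xs i - xs (i - 1)" using xs_strict[of "i - 1"] i(1,2) by auto
  have width: "0 \<le> xs N - xs 0" using xs_mono[of 0 N] by simp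
  have "(x - xs (i - 1)) * (xs N - xs 0) \<le> (xs i - xs (i - 1)) * (xs N - xs 0)"
    using i(4) width by (intro mult_right_mono) auto
  then have "(x - xs (i - 1)) * (xs N - xs 0) / (xs i - xs (i - 1)) \<le> xs N - xs 0"
    using gap by (simp add: pos_divide_le_eq mult.commute)
  moreover have "0 \<le> (x - xs (i - 1)) * (xs N - xs 0) / (xs i - xs (i - 1))"
    using i(3) gap width by simp
  ultimately show ?thesis unfolding Qmap_def Ivl_def i_def[symmetric] by auto
qed

end

locale scaled_partition = partition +
  fixes alpha :: "nat \<Rightarrow> nat \<Rightarrow> real \<Rightarrow> real"
  assumes alpha_bdd: "bdd_above (alpha_vals xs N alpha)"
begin

lemma abs_alpha_le_alpha_norm:
  assumes "1 \<le> i" "i \<le> N" "1 \<le> r" "q \<in> Ivl xs N"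
  shows "\<bar>alpha i r q\<bar> \<le> alpha_norm xs N alpha"
  unfolding alpha_norm_def
  by (rule cSup_upper[OF _ alpha_bdd]) (use assms in \<open>auto simp: alpha_vals_def\<close>)

lemma alpha_norm_nonneg: "0 \<le> alpha_norm xs N alpha"
  using abs_alpha_le_alpha_norm[of 1 1 "xs 0"] N_pos left_in_Ivl by force

lemma Top_diff_le:
  assumes x: "x \<in> Ivl xs N" and j: "1 \<le> j" and S: "\<bar>f x - g x\<bar> \<le> S"
    and E: "\<And>q. q \<in> Ivl xs N \<Longrightarrow> \<bar>h q - k q - (b q - c q)\<bar> \<le> E"
  shows "\<bar>Top xs N alpha j f b h x - Top xs N alpha j g c k x\<bar> \<le> S + alpha_norm xs N alpha * E"
proof -
  define i where "i = idx xs N x"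
  define q where "q = Qmap xs N i x"
  have q: "q \<in> Ivl xs N" unfolding q_def i_def by (rule Qmap_in_Ivl[OF x])
  have "\<bar>Top xs N alpha j f b h x - Top xs N alpha j g c k x\<bar>
      = \<bar>(f x - g x) + alpha i j q * (h q - k q - (b q - c q))\<bar>"
    by (simp add: Top_def Let_def i_def[symmetric] q_def[symmetric] algebra_simps)
  also have "\<dots> \<le> \<bar>f x - g x\<bar> + \<bar>alpha i j q\<bar> * \<bar>h q - k q - (b q - c q)\<bar>"
    by (simp add: abs_mult[symmetric] abs_triangle_ineq)
  also have "\<dots> \<le> S + alpha_norm xs N alpha * E"
  proof (intro add_mono mult_mono S E q)
    show "\<bar>alpha i j q\<bar> \<le> alpha_norm xs N alpha"
      using idx_bounds[OF x] j q unfolding i_def by (intro abs_alpha_le_alpha_norm) auto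
  qed (use alpha_norm_nonneg in auto)
  finally show ?thesis .
qed

lemma foldr_Top_contract:
  assumes "set js \<subseteq> {1..}" "\<And>q. q \<in> Ivl xs N \<Longrightarrow> \<bar>h q - k q\<bar> \<le> E" "x \<in> Ivl xs N"
  shows "\<bar>foldr (\<lambda>j. Top xs N alpha j f (b j)) js h x - foldr (\<lambda>j. Top xs N alpha j f (b j)) js k x\<bar>
     \<le> alpha_norm xs N alpha ^ length js * E"
  using assms(1,3)
proof (induction js arbitrary: x)
  case Nil
  then show ?case using assms(2) by simp
next
  case (Cons j js)
  let ?F = "foldr (\<lambda>j. Top xs N alpha j f (b j)) js"
  from Cons have "\<bar>Top xs N alpha j f (b j) (?F h) x - Top xs N alpha j f (b j) (?F k) x\<bar>
    \<le> 0 + alpha_norm xs N alpha * (alpha_norm xs N alpha ^ length js * E)"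
    by (intro Top_diff_le) auto
  then show ?case by simp
qed

lemma foldr_Top_diff_le:
  assumes "set js \<subseteq> {1..}"
    and S: "\<And>x. x \<in> Ivl xs N \<Longrightarrow> \<bar>f x - g x\<bar> \<le> S"
    and T: "\<And>j q. 1 \<le> j \<Longrightarrow> q \<in> Ivl xs N \<Longrightarrow> \<bar>b j q - c j q\<bar> \<le> T"
    and B: "\<And>q. q \<in> Ivl xs N \<Longrightarrow> \<bar>h q - k q\<bar> \<le> B"
    and invariant: "S + alpha_norm xs N alpha * (B + T) \<le> B"
    and "x \<in> Ivl xs N"
  shows "\<bar>foldr (\<lambda>j. Top xs N alpha j f (b j)) js h x - foldr (\<lambda>j. Top xs N alpha j g (c j)) js k x\<bar> \<le> B"
  using assms(1,6)
proof (induction js arbitrary: x)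
  case Nil
  then show ?case using B by simp
next
  case (Cons j js)
  let ?F = "foldr (\<lambda>j. Top xs N alpha j f (b j)) js"
  let ?G = "foldr (\<lambda>j. Top xs N alpha j g (c j)) js"
  have "\<bar>Top xs N alpha j f (b j) (?F h) x - Top xs N alpha j g (c j) (?G k) x\<bar>
    \<le> S + alpha_norm xs N alpha * (B + T)"
  proof (intro Top_diff_le S)
    fix q assume q: "q \<in> Ivl xs N"
    have "\<bar>?F h q - ?G k q\<bar> \<le> B" using Cons q by simp
    moreover have "\<bar>b j q - c j q\<bar> \<le> T" using T Cons.prems q by simp
    ultimately show "\<bar>?F h q - ?G k q - (b j q - c j q)\<bar> \<le> B + T" by linarith
  qed (use Cons.prems in auto)
  then show ?case using invariant by simp
qed

lemma Tcomp_convergent: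
  assumes base: "\<And>r q. 1 \<le> r \<Longrightarrow> q \<in> Ivl xs N \<Longrightarrow> \<bar>L r f q - f q\<bar> \<le> C"
    and lt1: "alpha_norm xs N alpha < 1" and x: "x \<in> Ivl xs N"
  shows "convergent (\<lambda>r. Tcomp xs N alpha L f r f x)"
proof (rule convergent_if_geometric_increments[OF alpha_norm_nonneg lt1])
  fix r
  let ?F = "foldr (\<lambda>j. Top xs N alpha j f (L j f)) [1..<Suc r]"
  \<comment> \<open>the new map, with index r + 1, acts innermost: on the starting function f\<close>
  have "[1..<Suc (Suc r)] = [1..<Suc r] @ [Suc r]" by simp
  then have step: "Tcomp xs N alpha L f (Suc r) f x = ?F (Top xs N alpha (Suc r) f (L (Suc r) f) f) x"
    unfolding Tcomp_def by simp
  have "\<bar>Top xs N alpha (Suc r) f (L (Suc r) f) f q - Top xs N alpha (Suc r) f f f q\<bar>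
      \<le> 0 + alpha_norm xs N alpha * C" if "q \<in> Ivl xs N" for q
    using that base[of "Suc r"] by (intro Top_diff_le) (auto simp: abs_minus_commute)
  moreover have "Top xs N alpha j f f f = f" for j by (simp add: Top_def fun_eq_iff)
  ultimately have "\<bar>?F (Top xs N alpha (Suc r) f (L (Suc r) f) f) x - ?F f x\<bar>
      \<le> alpha_norm xs N alpha ^ length [1..<Suc r] * (alpha_norm xs N alpha * C)"
    by (intro foldr_Top_contract x) auto
  then show "\<bar>Tcomp xs N alpha L f (Suc r) f x - Tcomp xs N alpha L f r f x\<bar>
      \<le> alpha_norm xs N alpha ^ r * (alpha_norm xs N alpha * C)"
    unfolding step by (simp add: Tcomp_def del: upt_Suc)
qed

lemma Tcomp_diff_le:
  assumes S: "\<And>x. x \<in> Ivl xs N \<Longrightarrow> \<bar>f x - g x\<bar> \<le> S"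
    and T: "\<And>r q. 1 \<le> r \<Longrightarrow> q \<in> Ivl xs N \<Longrightarrow> \<bar>L r f q - L r g q\<bar> \<le> T"
    and lt1: "alpha_norm xs N alpha < 1" and x: "x \<in> Ivl xs N"
  shows "\<bar>Tcomp xs N alpha L f r f x - Tcomp xs N alpha L g r g x\<bar>
    \<le> (S + alpha_norm xs N alpha * T) / (1 - alpha_norm xs N alpha)"
proof -
  let ?a = "alpha_norm xs N alpha"
  define B where "B = (S + ?a * T) / (1 - ?a)"
  have "0 \<le> S" "0 \<le> T" using S[OF left_in_Ivl] T[OF _ left_in_Ivl, of 1] by auto
  then have "S \<le> B" using alpha_norm_nonneg lt1 by (simp add: B_def field_simps)
  then have start: "\<bar>f q - g q\<bar> \<le> B" if "q \<in> Ivl xs N" for q using S[OF that] by linarith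
  have "S + ?a * (B + T) = B" using lt1 by (simp add: B_def field_simps)
  then show ?thesis unfolding Tcomp_def B_def[symmetric]
    by (intro foldr_Top_diff_le[where S = S and T = T] S T start x) auto
qed

lemma fractal_diff_le:
  assumes base_f: "\<And>r q. 1 \<le> r \<Longrightarrow> q \<in> Ivl xs N \<Longrightarrow> \<bar>L r f q - f q\<bar> \<le> Cf"
    and base_g: "\<And>r q. 1 \<le> r \<Longrightarrow> q \<in> Ivl xs N \<Longrightarrow> \<bar>L r g q - g q\<bar> \<le> Cg"
    and S: "\<And>x. x \<in> Ivl xs N \<Longrightarrow> \<bar>f x - g x\<bar> \<le> S"
    and T: "\<And>r q. 1 \<le> r \<Longrightarrow> q \<in> Ivl xs N \<Longrightarrow> \<bar>L r f q - L r g q\<bar> \<le> T"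
    and lt1: "alpha_norm xs N alpha < 1" and x: "x \<in> Ivl xs N"
  shows "\<bar>fractal xs N alpha L f x - fractal xs N alpha L g x\<bar>
    \<le> (S + alpha_norm xs N alpha * T) / (1 - alpha_norm xs N alpha)"
proof (rule LIMSEQ_le_const2)
  have "(\<lambda>r. Tcomp xs N alpha L f r f x) \<longlonglongrightarrow> fractal xs N alpha L f x"
    "(\<lambda>r. Tcomp xs N alpha L g r g x) \<longlonglongrightarrow> fractal xs N alpha L g x"
    unfolding fractal_def convergent_LIMSEQ_iff[symmetric]
    using Tcomp_convergent[where L = L and f = f, OF base_f lt1 x]
      Tcomp_convergent[where L = L and f = g, OF base_g lt1 x] by auto
  then show "(\<lambda>r. \<bar>Tcomp xs N alpha L f r f x - Tcomp xs N alpha L g r g x\<bar>)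
      \<longlonglongrightarrow> \<bar>fractal xs N alpha L f x - fractal xs N alpha L g x\<bar>"
    by (intro tendsto_rabs tendsto_diff)
  show "\<exists>r0. \<forall>r\<ge>r0. \<bar>Tcomp xs N alpha L f r f x - Tcomp xs N alpha L g r g x\<bar>
      \<le> (S + alpha_norm xs N alpha * T) / (1 - alpha_norm xs N alpha)"
    using Tcomp_diff_le[where L = L and f = f and g = g, OF S T lt1 x] by blast
qed

end

theorem mainTheorem6:
  fixes xs :: "nat \<Rightarrow> real" and N :: nat and d :: real
    and alpha :: "nat \<Rightarrow> nat \<Rightarrow> real \<Rightarrow> real"
    and Lr :: "nat \<Rightarrow> (real \<Rightarrow> real) \<Rightarrow> (real \<Rightarrow> real)"
    and L :: "(real \<Rightarrow> real) \<Rightarrow> (real \<Rightarrow> real)"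
    and f g :: "real \<Rightarrow> real"
  assumes N: "1 \<le> N"
    and part: "\<And>i. i < N \<Longrightarrow> xs i < xs (Suc i)"
    and d: "0 < d" "d \<le> 1"
    and alpha_cont: "\<And>i r. 1 \<le> i \<Longrightarrow> i \<le> N \<Longrightarrow> 1 \<le> r \<Longrightarrow> continuous_on (Ivl xs N) (alpha i r)"
    and alpha_bdd: "bdd_above (alpha_vals xs N alpha)"
    and alpha_lt1: "alpha_norm xs N alpha < 1"
    and Lr_maps: "\<And>r h. 1 \<le> r \<Longrightarrow> h \<in> Lip d (Ivl xs N) \<Longrightarrow> Lr r h \<in> Lip d (Ivl xs N)"
    and Lr_add: "\<And>r h k x. 1 \<le> r \<Longrightarrow> h \<in> Lip d (Ivl xs N) \<Longrightarrow> k \<in> Lip d (Ivl xs N) \<Longrightarrow>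
        x \<in> Ivl xs N \<Longrightarrow> Lr r (\<lambda>y. h y + k y) x = Lr r h x + Lr r k x"
    and Lr_scale: "\<And>r c h x. 1 \<le> r \<Longrightarrow> h \<in> Lip d (Ivl xs N) \<Longrightarrow>
        x \<in> Ivl xs N \<Longrightarrow> Lr r (\<lambda>y. c * h y) x = c * Lr r h x"
    and Lr_left: "\<And>r h. 1 \<le> r \<Longrightarrow> h \<in> Lip d (Ivl xs N) \<Longrightarrow> Lr r h (xs 0) = h (xs 0)"
    and Lr_right: "\<And>r h. 1 \<le> r \<Longrightarrow> h \<in> Lip d (Ivl xs N) \<Longrightarrow> Lr r h (xs N) = h (xs N)"
    and Lr_bdd: "\<exists>M. \<forall>r h. 1 \<le> r \<longrightarrow> h \<in> Lip d (Ivl xs N) \<longrightarrow>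
        supnorm (Ivl xs N) (Lr r h) \<le> M * supnorm (Ivl xs N) h"
    and L_maps: "\<And>h. h \<in> Lip d (Ivl xs N) \<Longrightarrow> L h \<in> Lip d (Ivl xs N)"
    and L_add: "\<And>h k x. h \<in> Lip d (Ivl xs N) \<Longrightarrow> k \<in> Lip d (Ivl xs N) \<Longrightarrow>
        x \<in> Ivl xs N \<Longrightarrow> L (\<lambda>y. h y + k y) x = L h x + L k x"
    and L_scale: "\<And>c h x. h \<in> Lip d (Ivl xs N) \<Longrightarrow>
        x \<in> Ivl xs N \<Longrightarrow> L (\<lambda>y. c * h y) x = c * L h x"
    and L_norm: "\<And>h. h \<in> Lip d (Ivl xs N) \<Longrightarrow>
        supnorm (Ivl xs N) (L h) = (SUP r\<in>{1..}. supnorm (Ivl xs N) (Lr r h))"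
    and f: "f \<in> Lip d (Ivl xs N)" and g: "g \<in> Lip d (Ivl xs N)"
  shows "supnorm (Ivl xs N) (\<lambda>x. fractal xs N alpha Lr f x - fractal xs N alpha Lr g x)
     \<le> 1 / (1 - alpha_norm xs N alpha) * supnorm (Ivl xs N) (\<lambda>x. f x - g x)
       + alpha_norm xs N alpha / (1 - alpha_norm xs N alpha) * supnorm (Ivl xs N) (\<lambda>x. L f x - L g x)"
proof -
  interpret scaled_partition xs N alpha using N part alpha_bdd by unfold_locales
  let ?I = "Ivl xs N" and ?a = "alpha_norm xs N alpha"
  let ?S = "supnorm ?I (\<lambda>x. f x - g x)" and ?T = "supnorm ?I (\<lambda>x. L f x - L g x)"
  have abs_le_supnorm: "\<bar>h x\<bar> \<le> supnorm ?I h" if "h \<in> Lip d ?I" "x \<in> ?I" for h x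
    using Lip_abs_le_supnorm[of h d "xs 0" "xs N" x] that d(1) by (simp add: Ivl_def)
  obtain M where M: "\<And>r h. 1 \<le> r \<Longrightarrow> h \<in> Lip d ?I \<Longrightarrow> supnorm ?I (Lr r h) \<le> M * supnorm ?I h"
    using Lr_bdd by blast
  have base: "\<bar>Lr r h q - h q\<bar> \<le> (M + 1) * supnorm ?I h" if "h \<in> Lip d ?I" "1 \<le> r" "q \<in> ?I" for h r q
    using abs_le_supnorm[OF Lr_maps[OF that(2,1)] that(3)] M[OF that(2,1)] abs_le_supnorm[OF that(1,3)]
    by (simp add: distrib_right)
  have fg: "(\<lambda>x. f x - g x) \<in> Lip d ?I" by (rule Lip_diff[OF f g])
  have L_diff: "supnorm ?I (L (\<lambda>x. f x - g x)) = ?T"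
  proof -
    have "L (\<lambda>x. f x - g x) x = L f x - L g x" if "x \<in> ?I" for x
      by (rule Lip_operator_diff[of d ?I L]) (simp_all add: L_add L_scale f g that)
    then show ?thesis unfolding supnorm_def by (intro SUP_cong) auto
  qed
  have Lr_diff_le: "\<bar>Lr r f q - Lr r g q\<bar> \<le> ?T" if r: "1 \<le> r" and q: "q \<in> ?I" for r q
  proof -
    have "Lr r (\<lambda>x. f x - g x) q = Lr r f q - Lr r g q"
      by (rule Lip_operator_diff[of d ?I "Lr r"]) (simp_all add: Lr_add[OF r] Lr_scale[OF r] f g q)
    moreover have "bdd_above ((\<lambda>r. supnorm ?I (Lr r (\<lambda>x. f x - g x))) ` {1..})"
      using M[OF _ fg] by (intro bdd_aboveI2[where M = "M * ?S"]) auto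
    then have "\<bar>Lr r (\<lambda>x. f x - g x) q\<bar> \<le> (SUP r\<in>{1..}. supnorm ?I (Lr r (\<lambda>x. f x - g x)))"
      using Lip_abs_le_SUP_supnorm[of "{1..}" "\<lambda>r. Lr r (\<lambda>x. f x - g x)" d "xs 0" "xs N"]
        Lr_maps fg d(1) r q by (simp add: Ivl_def)
    ultimately show ?thesis using L_norm[OF fg] L_diff by simp
  qed
  have "\<bar>fractal xs N alpha Lr f x - fractal xs N alpha Lr g x\<bar> \<le> (?S + ?a * ?T) / (1 - ?a)"
    if "x \<in> ?I" for x
    using fractal_diff_le[where L = Lr and f = f and g = g, OF base[OF f] base[OF g]
        abs_le_supnorm[OF fg] Lr_diff_le alpha_lt1 that] .
  then have "supnorm ?I (\<lambda>x. fractal xs N alpha Lr f x - fractal xs N alpha Lr g x) \<le> (?S + ?a * ?T) / (1 - ?a)"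
    unfolding supnorm_def using left_in_Ivl by (intro cSUP_least) auto
  then show ?thesis by (simp add: add_divide_distrib)
qed

end
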